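(* Let $(\lambda_1,\lambda_2)$ and $(\mu_1,\mu_2)$ be two distinct partitions of $n$ with exactly two (positive) parts each. Then there exist commuting nilpotent $n\times n$ matrices $B,A$ over $\mathbb{F}$ with $\mathrm{sh}(B)=(\lambda_1,\lambda_2)$ and $\mathrm{sh}(A)=(\mu_1,\mu_2)$ if and only if $n$ is even and one of the two partitions equals $(\frac n2,\frac n2)$ and the other equals $(\frac n2+1,\frac n2-1)$.
   Context: $\mathbb{F}$ is an algebraically closed field of characteristic $0$. For a nilpotent matrix $A$, $\mathrm{sh}(A)$ is the partition of $n$ given by the sizes of the Jordan blocks of its Jordan canonical form. *)

theory Defs
  imports "Jordan_Normal_Form.Jordan_Normal_Form_Uniqueness"
begin

definition nilpotent_mat :: "nat \<Rightarrow> 'a :: field mat \<Rightarrow> bool" where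
  "nilpotent_mat n A \<longleftrightarrow> A \<in> carrier_mat n n \<and> (\<exists>k. A ^\<^sub>m k = 0\<^sub>m n n)"

definition has_shape :: "'a :: field mat \<Rightarrow> nat multiset \<Rightarrow> bool" where
  "has_shape A p \<longleftrightarrow> (\<exists>n_as. jordan_nf A n_as \<and> mset (map fst n_as) = p)"

definition alg_closed_field :: "'a :: field itself \<Rightarrow> bool" where
  "alg_closed_field _ \<longleftrightarrow> (\<forall>p :: 'a poly. degree p \<ge> 1 \<longrightarrow> (\<exists>x. poly p x = 0))"

end

theory Submission
  imports Defs
begin

(*
  Only if.  Let B, A commute, with shapes {a, b} and {c, d}, a >= b, c >= d, a + b = c + d = n,
  and (after exchanging the roles of A and B) c < a; then a >= b + 2.  Conjugate B to the
  nilpotent Jordan matrix J with blocks of sizes a and b; the conjugate M of A commutes with J,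
  satisfies M^(a-1) = 0 (its blocks have size <= c <= a - 1) and has a two-dimensional kernel.
  A matrix commuting with J is determined by its values on the first vectors of the two
  Jordan chains, and the nilpotency of M kills the leading coefficients.  If a >= b + 3, this
  exhibits three linearly independent vectors in the kernel of M, a contradiction.  Hence
  a = b + 2 and then c = d = b + 1.

  If.  For n = 2k let B = J_k (+) J_k and A = B + N, where N maps the second block identically
  onto the first.  N commutes with B, and an explicit invertible matrix P (whose inverse
  divides by k, so characteristic 0 is used) conjugates A to J_(k+1) (+) J_(k-1).
*)

lemma mat_entry_unit_vec:
  fixes C :: "'a :: field mat"
  assumes "C \<in> carrier_mat n m" "i < n" "j < m"
  shows "C $$ (i, j) = (C *\<^sub>v unit_vec m j) $ i"
  using assms
  by (simp add: scalar_prod_def unit_vec_def if_distrib[of "\<lambda>x. _ * x"] cong: if_cong)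

lemma eq_mat_by_mult_vec:
  fixes A B :: "'a :: field mat"
  assumes "A \<in> carrier_mat n m" "B \<in> carrier_mat n m"
    and "\<And>w. w \<in> carrier_vec m \<Longrightarrow> A *\<^sub>v w = B *\<^sub>v w"
  shows "A = B"
proof (rule eq_matI)
  fix i j assume "i < dim_row B" "j < dim_col B"
  then show "A $$ (i, j) = B $$ (i, j)"
    using assms by (metis carrier_matD mat_entry_unit_vec unit_vec_carrier)
qed (use assms in auto)

lemma mat_mult_vec_index:
  fixes f :: "nat \<times> nat \<Rightarrow> 'a :: field"
  assumes "i < n" "w \<in> carrier_vec m"
  shows "(mat n m f *\<^sub>v w) $ i = (\<Sum>j<m. f (i, j) * w $ j)"
  using assms by (simp add: scalar_prod_def lessThan_atLeast0 row_def)

lemma sum_eq_single_term: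
  assumes "finite S" "x \<in> S" "\<And>i. i \<in> S \<Longrightarrow> i \<noteq> x \<Longrightarrow> f i = 0"
  shows "sum f S = f x"
  by (rule sum.remove[OF assms(1,2), THEN trans], subst sum.neutral, use assms(3) in auto)

lemma sum_two_deltas:
  fixes x1 x2 :: "'a :: field"
  assumes "t1 < m" "t2 < m"
  shows "(\<Sum>j<m. ((if j = t1 then x1 else 0) + (if j = t2 then x2 else 0)) * w $ j)
    = x1 * w $ t1 + x2 * w $ t2"
  using assms
  by (simp add: distrib_right sum.distrib if_distrib[of "\<lambda>x. x * _"] cong: if_cong)

lemma pow_mat_Suc_left:
  fixes M :: "'a :: field mat"
  assumes M: "M \<in> carrier_mat n n"
  shows "M ^\<^sub>m Suc j = M * M ^\<^sub>m j"
proof (induct j)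
  case (Suc j)
  have "M ^\<^sub>m Suc (Suc j) = (M * M ^\<^sub>m j) * M" using Suc by simp
  also have "\<dots> = M * (M ^\<^sub>m j * M)" by (rule assoc_mult_mat[OF M _ M], use M in simp)
  finally show ?case by simp
qed (use M in simp)

lemma pow_mat_Suc_mult_vec:
  fixes M :: "'a :: field mat"
  assumes M: "M \<in> carrier_mat n n" and v: "v \<in> carrier_vec n"
  shows "M ^\<^sub>m Suc m *\<^sub>v v = M ^\<^sub>m m *\<^sub>v (M *\<^sub>v v)"
    and "M ^\<^sub>m Suc m *\<^sub>v v = M *\<^sub>v (M ^\<^sub>m m *\<^sub>v v)"
  using assoc_mult_mat_vec[OF pow_carrier_mat[OF M] M v]
    assoc_mult_mat_vec[OF M pow_carrier_mat[OF M] v] pow_mat_Suc_left[OF M] by simp_all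

lemma pow_mat_eigenvector:
  fixes X :: "'a :: field mat"
  assumes X: "X \<in> carrier_mat n n" and v: "v \<in> carrier_vec n" and e: "X *\<^sub>v v = c \<cdot>\<^sub>v v"
  shows "X ^\<^sub>m k *\<^sub>v v = c ^ k \<cdot>\<^sub>v v"
proof (induct k)
  case (Suc k)
  have "X ^\<^sub>m Suc k *\<^sub>v v = X ^\<^sub>m k *\<^sub>v (c \<cdot>\<^sub>v v)"
    unfolding pow_mat_Suc_mult_vec(1)[OF X v] e ..
  also have "\<dots> = (c * c ^ k) \<cdot>\<^sub>v v"
    using X v Suc by (simp add: mult_mat_vec[of _ n n] smult_smult_assoc)
  finally show ?case by simp
qed (use v X in simp)

lemma similar_mat_wit_commute:
  fixes A B J :: "'a :: field mat"
  assumes wit: "similar_mat_wit B J P Q" and B: "B \<in> carrier_mat n n"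
    and A: "A \<in> carrier_mat n n" and comm: "B * A = A * B"
  shows "(Q * A * P) * J = J * (Q * A * P)"
proof -
  have J: "J \<in> carrier_mat n n" and P: "P \<in> carrier_mat n n" and Q: "Q \<in> carrier_mat n n"
    and PQ: "P * Q = 1\<^sub>m n" and J_eq: "J = Q * B * P"
    using similar_mat_witD2[OF B wit] similar_mat_witD2(3)[OF _ similar_mat_wit_sym[OF wit]] by auto
  have "(Q * A * P) * J = Q * (A * (P * Q) * B) * P"
    unfolding J_eq using P Q A B by (simp add: assoc_mult_mat[of _ n n _ n _ n])
  also have "\<dots> = Q * (B * (P * Q) * A) * P"
    unfolding PQ using A B comm by simp
  also have "\<dots> = J * (Q * A * P)"
    unfolding J_eq using P Q A B by (simp add: assoc_mult_mat[of _ n n _ n _ n])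
  finally show ?thesis .
qed

lemma mult_mat_vec_zero: "A \<in> carrier_mat n m \<Longrightarrow> A *\<^sub>v 0\<^sub>v m = (0\<^sub>v n :: 'a :: field vec)"
  by (intro eq_vecI) auto

lemma mult_mat_vec_zero_mat: "v \<in> carrier_vec m \<Longrightarrow> 0\<^sub>m n m *\<^sub>v v = (0\<^sub>v n :: 'a :: field vec)"
  by (intro eq_vecI) auto

lemma char_matrix_zero: "X \<in> carrier_mat n n \<Longrightarrow> char_matrix (X :: 'a :: field mat) 0 = X"
  unfolding char_matrix_def by (intro eq_matI, auto)


section \<open>Jordan matrices with two blocks\<close>

lemma two_block_jordan_index:
  assumes "i < p + q" "j < p + q"
  shows "jordan_matrix [(p, x), (q, y)] $$ (i, j) =
    (if i = j then (if i < p then x else y) else if Suc i = j \<and> j \<noteq> p then 1 else 0)"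
  using assms by (auto simp: jordan_matrix_def Let_def jordan_block_def)

lemma two_block_jordan_mult_vec:
  fixes x y :: "'a :: field"
  assumes "w \<in> carrier_vec (p + q)" "i < p + q"
  shows "(jordan_matrix [(p, x), (q, y)] *\<^sub>v w) $ i =
    (if i < p then x else y) * w $ i + (if Suc i < p + q \<and> Suc i \<noteq> p then w $ Suc i else 0)"
proof -
  have "(jordan_matrix [(p, x), (q, y)] *\<^sub>v w) $ i
      = (\<Sum>j<p + q. jordan_matrix [(p, x), (q, y)] $$ (i, j) * w $ j)"
    using assms by (simp add: scalar_prod_def lessThan_atLeast0)
  also have "\<dots> = (\<Sum>j<p + q. (if j = i then (if i < p then x else y) * w $ i else 0)
     + (if j = Suc i then (if Suc i \<noteq> p then w $ Suc i else 0) else 0))"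
    by (rule sum.cong, auto simp: two_block_jordan_index assms)
  also have "\<dots> = (if i < p then x else y) * w $ i
      + (if Suc i < p + q \<and> Suc i \<noteq> p then w $ Suc i else 0)"
    unfolding sum.distrib using assms by simp
  finally show ?thesis .
qed

text \<open>Read backwards from its last index, each block of a nilpotent two-block Jordan
  matrix acts as the shift of a Jordan chain.\<close>
lemma two_block_jordan_chain:
  assumes w: "w \<in> carrier_vec (p + q)" and blk: "(s, l) = (0, p) \<or> (s, l) = (p, q)" and k: "k < l"
  shows "(jordan_matrix [(p, 0 :: 'a :: field), (q, 0)] *\<^sub>v w) $ (s + l - 1 - k)
    = (if k = 0 then 0 else w $ (s + l - 1 - (k - 1)))"
proof -
  have i: "s + l - 1 - k < p + q" using blk k by auto
  have "(Suc (s + l - 1 - k) < p + q \<and> Suc (s + l - 1 - k) \<noteq> p) \<longleftrightarrow> k \<noteq> 0"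
    using blk k by auto
  moreover have "k \<noteq> 0 \<Longrightarrow> Suc (s + l - 1 - k) = s + l - 1 - (k - 1)" using k by auto
  ultimately show ?thesis using two_block_jordan_mult_vec[OF w i, of 0 0] by auto
qed

lemma nilpotent_two_block_pow_mult_vec:
  assumes w: "w \<in> carrier_vec (p + q)" and i: "i < p + q"
  shows "(jordan_matrix [(p, 0 :: 'a :: field), (q, 0)] ^\<^sub>m m *\<^sub>v w) $ i =
    (if (i < p \<and> i + m < p) \<or> (p \<le> i \<and> i + m < p + q) then w $ (i + m) else 0)"
  using w i
proof (induct m arbitrary: i w)
  case 0
  then show ?case by (cases "i < p") auto
next
  case (Suc m)
  let ?J = "jordan_matrix [(p, 0 :: 'a), (q, 0)]"
  have J: "?J \<in> carrier_mat (p + q) (p + q)" using jordan_matrix_carrier[of "[(p, 0 :: 'a), (q, 0)]"] by simp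
  have "(?J ^\<^sub>m Suc m *\<^sub>v w) $ i = (?J ^\<^sub>m m *\<^sub>v (?J *\<^sub>v w)) $ i"
    using pow_mat_Suc_mult_vec(1)[OF J Suc(2)] by simp
  also have "\<dots> = (if (i < p \<and> i + m < p) \<or> (p \<le> i \<and> i + m < p + q) then (?J *\<^sub>v w) $ (i + m) else 0)"
    by (rule Suc(1), use J Suc(2,3) in auto)
  also have "\<dots> = (if (i < p \<and> i + Suc m < p) \<or> (p \<le> i \<and> i + Suc m < p + q) then w $ (i + Suc m) else 0)"
  proof (cases "(i < p \<and> i + m < p) \<or> (p \<le> i \<and> i + m < p + q)")
    case True
    then have im: "i + m < p + q" by auto
    show ?thesis unfolding if_P[OF True] two_block_jordan_mult_vec[OF Suc(2) im] using True by auto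
  qed auto
  finally show ?case .
qed

lemma nilpotent_two_block_pow_zero:
  assumes "p \<le> m" "q \<le> m"
  shows "jordan_matrix [(p, 0 :: 'a :: field), (q, 0)] ^\<^sub>m m = 0\<^sub>m (p + q) (p + q)"
proof (rule eq_mat_by_mult_vec)
  fix w :: "'a vec" assume w: "w \<in> carrier_vec (p + q)"
  show "jordan_matrix [(p, 0), (q, 0)] ^\<^sub>m m *\<^sub>v w = 0\<^sub>m (p + q) (p + q) *\<^sub>v w"
  proof (rule eq_vecI)
    fix i assume "i < dim_vec (0\<^sub>m (p + q) (p + q) *\<^sub>v w)"
    then have i: "i < p + q" by simp
    then show "(jordan_matrix [(p, 0), (q, 0)] ^\<^sub>m m *\<^sub>v w) $ i = (0\<^sub>m (p + q) (p + q) *\<^sub>v w) $ i"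
      unfolding nilpotent_two_block_pow_mult_vec[OF w i] using assms w by auto
  qed simp
qed auto

text \<open>A nilpotent matrix similar to a two-block Jordan matrix has both eigenvalues zero:
  the first vector of each block is an eigenvector of the Jordan matrix.\<close>
lemma two_block_jordan_of_nilpotent:
  fixes X :: "'a :: field mat"
  assumes wit: "similar_mat_wit X (jordan_matrix [(p, x), (q, y)]) P Q"
    and X: "X \<in> carrier_mat n n" and nil: "X ^\<^sub>m k = 0\<^sub>m n n" and p: "p \<ge> 1" and q: "q \<ge> 1"
  shows "x = 0" "y = 0"
proof -
  let ?J = "jordan_matrix [(p, x), (q, y)]"
  have J: "?J \<in> carrier_mat n n" and P: "P \<in> carrier_mat n n" and Q: "Q \<in> carrier_mat n n"
    by (rule similar_mat_witD2[OF X wit])+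
  then have n: "n = p + q" by auto
  have "?J ^\<^sub>m k = Q * X ^\<^sub>m k * P"
    using similar_mat_wit_pow_id[OF similar_mat_wit_sym[OF wit]] .
  then have Jk: "?J ^\<^sub>m k = 0\<^sub>m n n" unfolding nil using P Q by simp
  have eigenvalue_zero: "(if s < p then x else y) = 0" if s: "s = 0 \<or> s = p" for s
  proof -
    let ?z = "if s < p then x else y"
    have u: "unit_vec n s \<in> carrier_vec (p + q)" using n by simp
    have "?J *\<^sub>v unit_vec n s = ?z \<cdot>\<^sub>v unit_vec n s"
    proof (rule eq_vecI)
      fix i assume "i < dim_vec (?z \<cdot>\<^sub>v unit_vec n s)"
      then have i: "i < p + q" using n by simp
      show "(?J *\<^sub>v unit_vec n s) $ i = (?z \<cdot>\<^sub>v unit_vec n s) $ i"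
        unfolding two_block_jordan_mult_vec[OF u i] using i s p q n by auto
    qed (use n in simp)
    from pow_mat_eigenvector[OF J _ this, of k] Jk
    have "?z ^ k \<cdot>\<^sub>v unit_vec n s = 0\<^sub>v n" by (simp add: mult_mat_vec_zero_mat)
    moreover have "s < n" using s p q n by auto
    ultimately have "(?z ^ k \<cdot>\<^sub>v unit_vec n s) $ s = 0" by auto
    then show ?thesis using \<open>s < n\<close> by simp
  qed
  show "x = 0" using eigenvalue_zero[of 0] p by simp
  show "y = 0" using eigenvalue_zero[of p] by simp
qed


lemma two_part_shapeE:
  fixes X :: "'a :: field mat"
  assumes nil: "nilpotent_mat n X" and sh: "has_shape X {#c, d#}" and c: "c \<ge> 1" and d: "d \<ge> 1"
  obtains p q P Q where "similar_mat_wit X (jordan_matrix [(p, 0), (q, 0)]) P Q"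
    "jordan_nf X [(p, 0), (q, 0)]" "(p = c \<and> q = d) \<or> (p = d \<and> q = c)"
proof -
  from sh obtain n_as where jnf: "jordan_nf X n_as" and ms: "mset (map fst n_as) = {#c, d#}"
    unfolding has_shape_def by auto
  from ms have "length n_as = 2"
    by (metis size_mset length_map size_add_mset size_empty numeral_2_eq_2)
  then obtain p x q y where nas: "n_as = [(p, x), (q, y)]"
    by (metis (no_types, opaque_lifting) One_nat_def Suc_length_conv length_0_conv numeral_2_eq_2 surj_pair)
  from ms nas have pq: "(p = c \<and> q = d) \<or> (p = d \<and> q = c)"
    by (auto simp: add_eq_conv_ex)
  from jnf nas obtain P Q where wit: "similar_mat_wit X (jordan_matrix [(p, x), (q, y)]) P Q"
    unfolding jordan_nf_def similar_mat_def by auto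
  from nil obtain k where X: "X \<in> carrier_mat n n" and k: "X ^\<^sub>m k = 0\<^sub>m n n"
    unfolding nilpotent_mat_def by auto
  have "p \<ge> 1" "q \<ge> 1" using pq c d by auto
  from two_block_jordan_of_nilpotent[OF wit X k this] wit jnf nas pq
  show thesis by (intro that[of p q P Q]) auto
qed

text \<open>A nilpotent matrix of shape {c, d} has a two-dimensional kernel (one vector per block) ...\<close>
lemma two_part_shape_kernel_dim:
  fixes X :: "'a :: field mat"
  assumes nil: "nilpotent_mat n X" and sh: "has_shape X {#c, d#}" and c: "c \<ge> 1" and d: "d \<ge> 1"
  shows "kernel_dim X = 2"
proof -
  obtain p q and P Q :: "'a mat" where jnf: "jordan_nf X [(p, 0), (q, 0)]" and pq: "(p = c \<and> q = d) \<or> (p = d \<and> q = c)"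
    by (rule two_part_shapeE[OF assms])
  from nil have X: "X \<in> carrier_mat n n" unfolding nilpotent_mat_def by auto
  have "dim_gen_eigenspace X 0 1 = min 1 p + min 1 q"
    using dim_gen_eigenspace[OF jnf, of 0 1] by simp
  also have "\<dots> = 2" using pq c d by auto
  finally show ?thesis unfolding dim_gen_eigenspace_def char_matrix_zero[OF X] using X by simp
qed

lemma two_part_shape_pow_zero:
  fixes X :: "'a :: field mat"
  assumes nil: "nilpotent_mat n X" and sh: "has_shape X {#c, d#}" and c: "c \<ge> 1" and d: "d \<ge> 1"
    and m: "c \<le> m" "d \<le> m"
  shows "X ^\<^sub>m m = 0\<^sub>m n n"
proof -
  obtain p q P Q where wit: "similar_mat_wit X (jordan_matrix [(p, 0), (q, 0)]) P Q"
    and pq: "(p = c \<and> q = d) \<or> (p = d \<and> q = c)"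
    by (rule two_part_shapeE[OF nil sh c d])
  from nil have X: "X \<in> carrier_mat n n" unfolding nilpotent_mat_def by auto
  have J: "jordan_matrix [(p, 0 :: 'a), (q, 0)] \<in> carrier_mat n n"
    and P: "P \<in> carrier_mat n n" and Q: "Q \<in> carrier_mat n n"
    by (rule similar_mat_witD2[OF X wit])+
  have "X ^\<^sub>m m = P * (jordan_matrix [(p, 0), (q, 0)]) ^\<^sub>m m * Q"
    by (rule similar_mat_wit_pow_id[OF wit])
  also have "(jordan_matrix [(p, 0 :: 'a), (q, 0)]) ^\<^sub>m m = 0\<^sub>m (p + q) (p + q)"
    by (rule nilpotent_two_block_pow_zero) (use m pq in auto)
  finally show ?thesis using J P Q by auto
qed


section \<open>Linear independence in a kernel via private coordinates\<close>

context kernel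
begin

lemma lin_indpt_private_coords:
  assumes S: "S \<subseteq> mat_kernel A"
    and priv: "\<And>v. v \<in> S \<Longrightarrow> \<exists>i<nc. v $ i \<noteq> 0 \<and> (\<forall>w\<in>S. w \<noteq> v \<longrightarrow> w $ i = 0)"
  shows "Ker.lin_indpt S"
proof
  assume "Ker.lin_dep S"
  then obtain v a U where finU: "finite U" and US: "U \<subseteq> S"
      and lc: "lincomb a U = 0\<^sub>v nc" and vU: "v \<in> U" and av0: "a v \<noteq> 0"
    unfolding Ker.lin_dep_def by auto
  from priv[of v] vU US obtain i where i: "i < nc" and vi: "v $ i \<noteq> 0"
    and oth: "\<And>w. w \<in> S \<Longrightarrow> w \<noteq> v \<Longrightarrow> w $ i = 0" by auto
  have "0 = lincomb a U $ i" using lc i by simp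
  also have "\<dots> = (\<Sum>x\<in>U. a x * x $ i)" by (rule lincomb_index[OF i], use US S in auto)
  also have "\<dots> = a v * v $ i" by (rule sum_eq_single_term[OF finU vU], use oth US in auto)
  finally show False using av0 vi by simp
qed

lemma card_le_kernel_dim:
  assumes S: "S \<subseteq> mat_kernel A"
    and priv: "\<And>v. v \<in> S \<Longrightarrow> \<exists>i<nc. v $ i \<noteq> 0 \<and> (\<forall>w\<in>S. w \<noteq> v \<longrightarrow> w $ i = 0)"
  shows "card S \<le> kernel_dim A"
proof -
  from kernel_basis_exists[OF A] obtain B where "finite B" "Ker.basis B" by auto
  then have "Ker.fin_dim" unfolding Ker.fin_dim_def Ker.basis_def by auto
  from Ker.li_le_dim(2)[OF this _ lin_indpt_private_coords[OF S priv]] S show ?thesis by simp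
qed

end

section \<open>Matrices commuting with a nilpotent matrix with two Jordan chains\<close>

text \<open>The coordinates 0..<n are split into two Jordan chains E 0, ..., E (a-1) and
  F 0, ..., F (b-1) of the nilpotent matrix J, which maps the basis vector at E i to the one
  at E (i+1) (and the last one to 0), and likewise for F.\<close>
locale two_chains =
  fixes n a b :: nat and E F :: "nat \<Rightarrow> nat" and J M :: "'a :: field mat"
  assumes dim: "n = a + b"
  and E_lt: "\<And>i. i < a \<Longrightarrow> E i < n" and F_lt: "\<And>i. i < b \<Longrightarrow> F i < n"
  and E_inj: "\<And>i j. i < a \<Longrightarrow> j < a \<Longrightarrow> E i = E j \<Longrightarrow> i = j"
  and F_inj: "\<And>i j. i < b \<Longrightarrow> j < b \<Longrightarrow> F i = F j \<Longrightarrow> i = j"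
  and E_neq_F: "\<And>i j. i < a \<Longrightarrow> j < b \<Longrightarrow> E i \<noteq> F j"
  and J_carrier: "J \<in> carrier_mat n n" and M_carrier: "M \<in> carrier_mat n n"
  and J_E: "\<And>w k. w \<in> carrier_vec n \<Longrightarrow> k < a \<Longrightarrow>
    (J *\<^sub>v w) $ E k = (if k = 0 then 0 else w $ E (k - 1))"
  and J_F: "\<And>w k. w \<in> carrier_vec n \<Longrightarrow> k < b \<Longrightarrow>
    (J *\<^sub>v w) $ F k = (if k = 0 then 0 else w $ F (k - 1))"
  and commute: "M * J = J * M"
begin

lemma chains_cover: "E ` {..<a} \<union> F ` {..<b} = {..<n}"
proof (rule card_subset_eq)
  show "E ` {..<a} \<union> F ` {..<b} \<subseteq> {..<n}" using E_lt F_lt by auto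
  have "card (E ` {..<a} \<union> F ` {..<b}) = card (E ` {..<a}) + card (F ` {..<b})"
    by (rule card_Un_disjoint, auto dest: E_neq_F)
  also have "card (E ` {..<a}) = a" by (subst card_image, auto intro!: inj_onI E_inj)
  also have "card (F ` {..<b}) = b" by (subst card_image, auto intro!: inj_onI F_inj)
  finally show "card (E ` {..<a} \<union> F ` {..<b}) = card {..<n}" using dim by simp
qed simp

lemma eq_vec_by_chains:
  assumes v: "v \<in> carrier_vec n" and w: "w \<in> carrier_vec n"
    and "\<And>k. k < a \<Longrightarrow> v $ E k = w $ E k" and "\<And>k. k < b \<Longrightarrow> v $ F k = w $ F k"
  shows "v = w"
proof (rule eq_vecI)
  fix r assume "r < dim_vec w"
  then have "r \<in> E ` {..<a} \<union> F ` {..<b}" using w chains_cover by auto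
  then show "v $ r = w $ r" using assms(3,4) by auto
qed (use v w in simp)

lemma sum_over_chains: "(\<Sum>r<n. g r) = (\<Sum>i<a. g (E i)) + (\<Sum>i<b. g (F i))"
proof -
  have "(\<Sum>r<n. g r) = sum g (E ` {..<a}) + sum g (F ` {..<b})"
    unfolding chains_cover[symmetric] by (rule sum.union_disjoint, auto dest: E_neq_F)
  also have "sum g (E ` {..<a}) = (\<Sum>i<a. g (E i))" by (subst sum.reindex, auto intro!: inj_onI E_inj)
  also have "sum g (F ` {..<b}) = (\<Sum>i<b. g (F i))" by (subst sum.reindex, auto intro!: inj_onI F_inj)
  finally show ?thesis .
qed

definition uE :: "nat \<Rightarrow> 'a vec" where "uE i = unit_vec n (E i)"
definition uF :: "nat \<Rightarrow> 'a vec" where "uF i = unit_vec n (F i)"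

lemma uE_carrier[simp]: "uE i \<in> carrier_vec n" and uF_carrier[simp]: "uF i \<in> carrier_vec n"
  unfolding uE_def uF_def by auto

lemma uE_dim[simp]: "dim_vec (uE i) = n" and uF_dim[simp]: "dim_vec (uF i) = n"
  unfolding uE_def uF_def by auto

lemma uE_E: "i < a \<Longrightarrow> k < a \<Longrightarrow> uE i $ E k = (if k = i then 1 else 0)"
  unfolding uE_def using E_lt E_inj by auto
lemma uE_F: "i < a \<Longrightarrow> k < b \<Longrightarrow> uE i $ F k = 0"
  unfolding uE_def using E_lt F_lt E_neq_F[of i k] by auto
lemma uF_F: "i < b \<Longrightarrow> k < b \<Longrightarrow> uF i $ F k = (if k = i then 1 else 0)"
  unfolding uF_def using F_lt F_inj by auto
lemma uF_E: "i < b \<Longrightarrow> k < a \<Longrightarrow> uF i $ E k = 0"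
  unfolding uF_def using E_lt F_lt E_neq_F[of k i] by auto

lemma J_uE: "i < a \<Longrightarrow> J *\<^sub>v uE i = (if Suc i < a then uE (Suc i) else 0\<^sub>v n)"
  by (rule eq_vec_by_chains, insert J_carrier,
      auto simp del: index_mult_mat_vec simp: J_E J_F uE_E uE_F E_lt F_lt)

lemma J_uF: "i < b \<Longrightarrow> J *\<^sub>v uF i = (if Suc i < b then uF (Suc i) else 0\<^sub>v n)"
  by (rule eq_vec_by_chains, insert J_carrier,
      auto simp del: index_mult_mat_vec simp: J_E J_F uF_E uF_F E_lt F_lt)

lemma M_J_commute_vec: "v \<in> carrier_vec n \<Longrightarrow> M *\<^sub>v (J *\<^sub>v v) = J *\<^sub>v (M *\<^sub>v v)"
  using assoc_mult_mat_vec[OF M_carrier J_carrier, of v]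
    assoc_mult_mat_vec[OF J_carrier M_carrier, of v] commute by simp

definition "cEE k = (M *\<^sub>v uE 0) $ E k"
definition "cEF k = (M *\<^sub>v uE 0) $ F k"
definition "cFE k = (M *\<^sub>v uF 0) $ E k"
definition "cFF k = (M *\<^sub>v uF 0) $ F k"

text \<open>Since uE i = J^i (uE 0) and M commutes with J, the image of uE i is the image of uE 0
  shifted i steps along the chains (M is block Toeplitz).\<close>
lemma M_uE_coords:
  "i < a \<Longrightarrow> (\<forall>k<a. (M *\<^sub>v uE i) $ E k = (if i \<le> k then cEE (k - i) else 0))
    \<and> (\<forall>k<b. (M *\<^sub>v uE i) $ F k = (if i \<le> k then cEF (k - i) else 0))"
proof (induct i)
  case 0
  then show ?case by (simp add: cEE_def cEF_def)
next
  case (Suc i)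
  then have i: "i < a" "Suc i < a" by auto
  have eq: "M *\<^sub>v uE (Suc i) = J *\<^sub>v (M *\<^sub>v uE i)"
    using J_uE[OF i(1)] i M_J_commute_vec[of "uE i"] by auto
  have c: "M *\<^sub>v uE i \<in> carrier_vec n" using M_carrier by simp
  from Suc(1)[OF i(1)] show ?case unfolding eq using J_E[OF c] J_F[OF c] by auto
qed

lemma M_uF_coords:
  "i < b \<Longrightarrow> (\<forall>k<a. (M *\<^sub>v uF i) $ E k = (if i \<le> k then cFE (k - i) else 0))
    \<and> (\<forall>k<b. (M *\<^sub>v uF i) $ F k = (if i \<le> k then cFF (k - i) else 0))"
proof (induct i)
  case 0
  then show ?case by (simp add: cFE_def cFF_def)
next
  case (Suc i)
  then have i: "i < b" "Suc i < b" by auto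
  have eq: "M *\<^sub>v uF (Suc i) = J *\<^sub>v (M *\<^sub>v uF i)"
    using J_uF[OF i(1)] i M_J_commute_vec[of "uF i"] by auto
  have c: "M *\<^sub>v uF i \<in> carrier_vec n" using M_carrier by simp
  from Suc(1)[OF i(1)] show ?case unfolding eq using J_E[OF c] J_F[OF c] by auto
qed

lemma M_uE:
  assumes "i < a"
  shows "k < a \<Longrightarrow> (M *\<^sub>v uE i) $ E k = (if i \<le> k then cEE (k - i) else 0)"
    and "k < b \<Longrightarrow> (M *\<^sub>v uE i) $ F k = (if i \<le> k then cEF (k - i) else 0)"
  using M_uE_coords[OF assms] by auto

lemma M_uF:
  assumes "i < b"
  shows "k < a \<Longrightarrow> (M *\<^sub>v uF i) $ E k = (if i \<le> k then cFE (k - i) else 0)"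
    and "k < b \<Longrightarrow> (M *\<^sub>v uF i) $ F k = (if i \<le> k then cFF (k - i) else 0)"
  using M_uF_coords[OF assms] by auto

lemma M_mult_vec_E:
  assumes v: "v \<in> carrier_vec n" and k: "k < a"
  shows "(M *\<^sub>v v) $ E k = (\<Sum>i<a. (if i \<le> k then cEE (k - i) else 0) * v $ E i)
     + (\<Sum>i<b. (if i \<le> k then cFE (k - i) else 0) * v $ F i)"
proof -
  have "(M *\<^sub>v v) $ E k = (\<Sum>r<n. M $$ (E k, r) * v $ r)"
    using M_carrier v E_lt[OF k] by (simp add: scalar_prod_def lessThan_atLeast0)
  also have "\<dots> = (\<Sum>i<a. M $$ (E k, E i) * v $ E i) + (\<Sum>i<b. M $$ (E k, F i) * v $ F i)"
    by (rule sum_over_chains)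
  also have "(\<Sum>i<a. M $$ (E k, E i) * v $ E i) = (\<Sum>i<a. (if i \<le> k then cEE (k - i) else 0) * v $ E i)"
    by (rule sum.cong[OF refl], subst mat_entry_unit_vec[OF M_carrier],
        insert E_lt k M_uE, auto simp: uE_def[symmetric])
  also have "(\<Sum>i<b. M $$ (E k, F i) * v $ F i) = (\<Sum>i<b. (if i \<le> k then cFE (k - i) else 0) * v $ F i)"
    by (rule sum.cong[OF refl], subst mat_entry_unit_vec[OF M_carrier],
        insert E_lt F_lt k M_uF, auto simp: uF_def[symmetric])
  finally show ?thesis .
qed

lemma M_mult_vec_F:
  assumes v: "v \<in> carrier_vec n" and k: "k < b"
  shows "(M *\<^sub>v v) $ F k = (\<Sum>i<a. (if i \<le> k then cEF (k - i) else 0) * v $ E i)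
     + (\<Sum>i<b. (if i \<le> k then cFF (k - i) else 0) * v $ F i)"
proof -
  have "(M *\<^sub>v v) $ F k = (\<Sum>r<n. M $$ (F k, r) * v $ r)"
    using M_carrier v F_lt[OF k] by (simp add: scalar_prod_def lessThan_atLeast0)
  also have "\<dots> = (\<Sum>i<a. M $$ (F k, E i) * v $ E i) + (\<Sum>i<b. M $$ (F k, F i) * v $ F i)"
    by (rule sum_over_chains)
  also have "(\<Sum>i<a. M $$ (F k, E i) * v $ E i) = (\<Sum>i<a. (if i \<le> k then cEF (k - i) else 0) * v $ E i)"
    by (rule sum.cong[OF refl], subst mat_entry_unit_vec[OF M_carrier],
        insert E_lt F_lt k M_uE, auto simp: uE_def[symmetric])
  also have "(\<Sum>i<b. M $$ (F k, F i) * v $ F i) = (\<Sum>i<b. (if i \<le> k then cFF (k - i) else 0) * v $ F i)"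
    by (rule sum.cong[OF refl], subst mat_entry_unit_vec[OF M_carrier],
        insert F_lt k M_uF, auto simp: uF_def[symmetric])
  finally show ?thesis .
qed

end


locale long_chain = two_chains +
  assumes b_pos: "1 \<le> b" and long: "b + 3 \<le> a" and M_nilpotent: "M ^\<^sub>m (a - 1) = 0\<^sub>m n n"
begin

lemma last_indices: "a - 1 < a" "a - 2 < a" "a - 3 < a" "b - 1 < b" "0 < a" "0 < b"
  using long b_pos by auto

text \<open>M (uF (b - 1)) is killed by J, so it lies in the span of the chain ends; this forces
  the first a - b coefficients cFE to vanish.\<close>
lemma cFE_vanishes: "j + b < a \<Longrightarrow> cFE j = 0"
proof -
  assume jb: "j + b < a"
  have "J *\<^sub>v (M *\<^sub>v uF (b - 1)) = 0\<^sub>v n"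
    using M_J_commute_vec[of "uF (b - 1)"] J_uF[OF last_indices(4)] b_pos M_carrier
    by (simp add: mult_mat_vec_zero)
  then have "(J *\<^sub>v (M *\<^sub>v uF (b - 1))) $ E (j + b) = 0" using E_lt[OF jb] by simp
  moreover have "(J *\<^sub>v (M *\<^sub>v uF (b - 1))) $ E (j + b) = cFE j"
    using J_E[of "M *\<^sub>v uF (b - 1)" "j + b"] jb b_pos M_uF(1)[OF last_indices(4), of "j + b - 1"]
      M_carrier by simp
  ultimately show "cFE j = 0" by simp
qed

lemma M_mult_vec_E0: "v \<in> carrier_vec n \<Longrightarrow> (M *\<^sub>v v) $ E 0 = cEE 0 * v $ E 0"
proof -
  assume v: "v \<in> carrier_vec n"
  have "(\<Sum>i<a. (if i \<le> 0 then cEE (0 - i) else 0) * v $ E i) = cEE 0 * v $ E 0"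
    by (subst sum_eq_single_term[of _ 0], use last_indices in auto)
  moreover have "(\<Sum>i<b. (if i \<le> 0 then cFE (0 - i) else 0) * v $ F i) = 0"
    by (rule sum.neutral, use cFE_vanishes[of 0] long in auto)
  ultimately show ?thesis using M_mult_vec_E[OF v last_indices(5)] by simp
qed

lemma M_mult_vec_F0: "v \<in> carrier_vec n \<Longrightarrow> (M *\<^sub>v v) $ F 0 = cEF 0 * v $ E 0 + cFF 0 * v $ F 0"
proof -
  assume v: "v \<in> carrier_vec n"
  have "(\<Sum>i<a. (if i \<le> 0 then cEF (0 - i) else 0) * v $ E i) = cEF 0 * v $ E 0"
    by (subst sum_eq_single_term[of _ 0], use last_indices in auto)
  moreover have "(\<Sum>i<b. (if i \<le> 0 then cFF (0 - i) else 0) * v $ F i) = cFF 0 * v $ F 0"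
    by (subst sum_eq_single_term[of _ 0], use last_indices in auto)
  ultimately show ?thesis using M_mult_vec_F[OF v last_indices(6)] by simp
qed

text \<open>The diagonal coefficients vanish: cEE 0 and cFF 0 are eigenvalues of the nilpotent M.\<close>
lemma cEE_0: "cEE 0 = 0"
proof -
  have pow: "v \<in> carrier_vec n \<Longrightarrow> (M ^\<^sub>m m *\<^sub>v v) $ E 0 = cEE 0 ^ m * v $ E 0" for m v
  proof (induct m arbitrary: v)
    case (Suc m)
    then show ?case
      unfolding pow_mat_Suc_mult_vec(1)[OF M_carrier Suc(2)]
        Suc(1)[OF mult_mat_vec_carrier[OF M_carrier Suc(2)]] M_mult_vec_E0[OF Suc(2)] by simp
  qed (use M_carrier in simp)
  have "cEE 0 ^ (a - 1) * uE 0 $ E 0 = 0"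
    using pow[of "uE 0" "a - 1"] E_lt[OF last_indices(5)] unfolding M_nilpotent by simp
  then have "cEE 0 ^ (a - 1) = 0" using uE_E[of 0 0] last_indices by simp
  then show ?thesis by simp
qed

lemma cFF_0: "cFF 0 = 0"
proof -
  have pow: "v \<in> carrier_vec n \<Longrightarrow> v $ E 0 = 0 \<Longrightarrow> (M ^\<^sub>m m *\<^sub>v v) $ F 0 = cFF 0 ^ m * v $ F 0" for m v
  proof (induct m arbitrary: v)
    case (Suc m)
    have c: "M *\<^sub>v v \<in> carrier_vec n" using M_carrier Suc(2) by simp
    have z: "(M *\<^sub>v v) $ E 0 = 0" using M_mult_vec_E0[OF Suc(2)] cEE_0 by simp
    show ?case unfolding pow_mat_Suc_mult_vec(1)[OF M_carrier Suc(2)] Suc(1)[OF c z]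
        M_mult_vec_F0[OF Suc(2)] Suc(3) by simp
  qed (use M_carrier in simp)
  have "cFF 0 ^ (a - 1) * uF 0 $ F 0 = 0"
    using pow[of "uF 0" "a - 1"] uF_E[of 0 0] F_lt[of 0] last_indices unfolding M_nilpotent by simp
  then have "cFF 0 ^ (a - 1) = 0" using uF_F[of 0 0] last_indices by simp
  then show ?thesis by simp
qed

text \<open>The j-th power of M maps uE 0 to a vector that starts at E j with cEE 1 ^ j,
  and vanishes before E j and at F 0 .. F (j - 2).\<close>
definition chain_inv :: "nat \<Rightarrow> 'a vec \<Rightarrow> bool" where
  "chain_inv j v \<longleftrightarrow> v $ E j = cEE 1 ^ j \<and> (\<forall>i<j. v $ E i = 0) \<and> (\<forall>i<b. Suc i < j \<longrightarrow> v $ F i = 0)"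

lemma chain_inv_step_E:
  assumes v: "v \<in> carrier_vec n" and j: "Suc j < a" and I: "chain_inv j v" and k: "k \<le> Suc j"
  shows "(M *\<^sub>v v) $ E k = (if k = Suc j then cEE 1 ^ Suc j else 0)"
proof -
  from I have vj: "v $ E j = cEE 1 ^ j" and vE: "\<And>i. i < j \<Longrightarrow> v $ E i = 0"
    and vF: "\<And>i. i < b \<Longrightarrow> Suc i < j \<Longrightarrow> v $ F i = 0" unfolding chain_inv_def by auto
  have ka: "k < a" using k j by simp
  have F_part: "(\<Sum>i<b. (if i \<le> k then cFE (k - i) else 0) * v $ F i) = 0"
  proof (rule sum.neutral, intro ballI)
    fix i assume i: "i \<in> {..<b}"
    show "(if i \<le> k then cFE (k - i) else 0) * v $ F i = 0"
    proof (cases "i \<le> k")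
      case True
      show ?thesis
      proof (cases "k - i + b < a")
        case False
        with True k long have "Suc i < j" by arith
        then show ?thesis using vF[of i] i by simp
      qed (simp add: cFE_vanishes)
    qed simp
  qed
  have E_part: "(\<Sum>i<a. (if i \<le> k then cEE (k - i) else 0) * v $ E i)
      = (if k = Suc j then cEE 1 ^ Suc j else 0)"
  proof (cases "k = Suc j")
    case True
    have "(\<Sum>i<a. (if i \<le> k then cEE (k - i) else 0) * v $ E i)
        = (if j \<le> k then cEE (k - j) else 0) * v $ E j"
    proof (rule sum_eq_single_term)
      fix i assume "i \<in> {..<a}" "i \<noteq> j"
      then show "(if i \<le> k then cEE (k - i) else 0) * v $ E i = 0"
        using vE[of i] cEE_0 True by (cases "i < j") (auto simp: le_Suc_eq)
    qed (use j in auto)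
    then show ?thesis using True vj by simp
  next
    case False
    have "(if i \<le> k then cEE (k - i) else 0) * v $ E i = 0" for i
      using vE[of i] cEE_0 False k by (cases "i < j") auto
    then show ?thesis using False by simp
  qed
  show ?thesis using M_mult_vec_E[OF v ka] E_part F_part by simp
qed

lemma chain_inv_step_F:
  assumes v: "v \<in> carrier_vec n" and I: "chain_inv j v" and k: "k < b" "k < j"
  shows "(M *\<^sub>v v) $ F k = 0"
proof -
  from I have vE: "\<And>i. i < j \<Longrightarrow> v $ E i = 0"
    and vF: "\<And>i. i < b \<Longrightarrow> Suc i < j \<Longrightarrow> v $ F i = 0" unfolding chain_inv_def by auto
  have "(\<Sum>i<a. (if i \<le> k then cEF (k - i) else 0) * v $ E i) = 0"
    by (rule sum.neutral, use vE k in auto)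
  moreover have "(\<Sum>i<b. (if i \<le> k then cFF (k - i) else 0) * v $ F i) = 0"
  proof (rule sum.neutral, intro ballI)
    fix i assume "i \<in> {..<b}"
    then show "(if i \<le> k then cFF (k - i) else 0) * v $ F i = 0"
      using vF[of i] cFF_0 k by (cases "i = k") auto
  qed
  ultimately show ?thesis using M_mult_vec_F[OF v k(1)] by simp
qed

lemma chain_inv_step:
  assumes "v \<in> carrier_vec n" "Suc j < a" "chain_inv j v"
  shows "chain_inv (Suc j) (M *\<^sub>v v)"
  using chain_inv_step_E[OF assms] chain_inv_step_F[OF assms(1,3)] unfolding chain_inv_def by auto

text \<open>Since M ^ (a - 1) = 0, the invariant at j = a - 1 forces cEE 1 = 0.\<close>
lemma cEE_1: "cEE 1 = 0"
proof -
  have "j < a \<Longrightarrow> chain_inv j (M ^\<^sub>m j *\<^sub>v uE 0)" for j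
  proof (induct j)
    case 0
    then show ?case unfolding chain_inv_def using uE_E[of 0 0] last_indices M_carrier by simp
  next
    case (Suc j)
    show ?case unfolding pow_mat_Suc_mult_vec(2)[OF M_carrier uE_carrier]
      by (rule chain_inv_step[OF _ Suc(2) Suc(1)],
          use Suc(2) mult_mat_vec_carrier[OF pow_carrier_mat[OF M_carrier] uE_carrier] in auto)
  qed
  from this[of "a - 1"] have "(M ^\<^sub>m (a - 1) *\<^sub>v uE 0) $ E (a - 1) = cEE 1 ^ (a - 1)"
    unfolding chain_inv_def using last_indices by simp
  moreover have "(M ^\<^sub>m (a - 1) *\<^sub>v uE 0) $ E (a - 1) = 0"
    unfolding M_nilpotent using E_lt last_indices by simp
  ultimately show ?thesis using long by simp
qed

lemma M_uE_last: "M *\<^sub>v uE (a - 1) = 0\<^sub>v n"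
proof (rule eq_vec_by_chains)
  fix k assume k: "k < a"
  show "(M *\<^sub>v uE (a - 1)) $ E k = 0\<^sub>v n $ E k"
    unfolding M_uE(1)[OF last_indices(1) k] using k E_lt[OF k] cEE_0 by auto
next
  fix k assume k: "k < b"
  show "(M *\<^sub>v uE (a - 1)) $ F k = 0\<^sub>v n $ F k"
    unfolding M_uE(2)[OF last_indices(1) k] using k F_lt[OF k] long by auto
qed (use M_carrier in auto)

lemma M_uE_before_last: "M *\<^sub>v uE (a - 2) = 0\<^sub>v n"
proof (rule eq_vec_by_chains)
  fix k assume k: "k < a"
  show "(M *\<^sub>v uE (a - 2)) $ E k = 0\<^sub>v n $ E k"
  proof (cases "a - 2 \<le> k")
    case True
    then have "k - (a - 2) = 0 \<or> k - (a - 2) = 1" using k by arith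
    then show ?thesis unfolding M_uE(1)[OF last_indices(2) k] using k E_lt[OF k] cEE_0 cEE_1 by auto
  qed (unfold M_uE(1)[OF last_indices(2) k], use k E_lt[OF k] in auto)
next
  fix k assume k: "k < b"
  show "(M *\<^sub>v uE (a - 2)) $ F k = 0\<^sub>v n $ F k"
    unfolding M_uE(2)[OF last_indices(2) k] using k F_lt[OF k] long by auto
qed (use M_carrier in auto)

lemma uE_last_E: "k < a \<Longrightarrow> (c \<cdot>\<^sub>v uE (a - 1)) $ E k = (if k = a - 1 then c else 0)"
  using uE_E[OF last_indices(1)] E_lt by simp

lemma M_uE_third_last: "M *\<^sub>v uE (a - 3) = cEE 2 \<cdot>\<^sub>v uE (a - 1)"
proof (rule eq_vec_by_chains)
  fix k assume k: "k < a"
  show "(M *\<^sub>v uE (a - 3)) $ E k = (cEE 2 \<cdot>\<^sub>v uE (a - 1)) $ E k"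
  proof (cases "a - 3 \<le> k")
    case True
    then have "k - (a - 3) = 0 \<and> k \<noteq> a - 1 \<or> k - (a - 3) = 1 \<and> k \<noteq> a - 1 \<or> k - (a - 3) = 2 \<and> k = a - 1"
      using k long by arith
    then show ?thesis unfolding M_uE(1)[OF last_indices(3) k] uE_last_E[OF k] using cEE_0 cEE_1 by auto
  next
    case False
    then have "k \<noteq> a - 1" using long by arith
    then show ?thesis unfolding M_uE(1)[OF last_indices(3) k] uE_last_E[OF k] using False by auto
  qed
next
  fix k assume k: "k < b"
  show "(M *\<^sub>v uE (a - 3)) $ F k = (cEE 2 \<cdot>\<^sub>v uE (a - 1)) $ F k"
    unfolding M_uE(2)[OF last_indices(3) k] using k F_lt[OF k] long uE_F[of "a - 1" k] by auto
qed (use M_carrier in auto)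

lemma M_uF_last: "M *\<^sub>v uF (b - 1) = cFE (a - b) \<cdot>\<^sub>v uE (a - 1)"
proof (rule eq_vec_by_chains)
  fix k assume k: "k < a"
  show "(M *\<^sub>v uF (b - 1)) $ E k = (cFE (a - b) \<cdot>\<^sub>v uE (a - 1)) $ E k"
  proof (cases "k = a - 1")
    case True
    then show ?thesis unfolding M_uF(1)[OF last_indices(4) k] uE_last_E[OF k]
      using long b_pos by (simp add: Suc_diff_le)
  next
    case False
    have "cFE (k - (b - 1)) = 0" if "b - 1 \<le> k" by (rule cFE_vanishes, use that False k b_pos in arith)
    then show ?thesis unfolding M_uF(1)[OF last_indices(4) k] uE_last_E[OF k] using False by simp
  qed
next
  fix k assume k: "k < b"
  show "(M *\<^sub>v uF (b - 1)) $ F k = (cFE (a - b) \<cdot>\<^sub>v uE (a - 1)) $ F k"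
    unfolding M_uF(2)[OF last_indices(4) k] using k F_lt[OF k] long uE_F[of "a - 1" k] cFF_0 by auto
qed (use M_carrier in auto)

definition extra_kernel_vec :: "'a vec" where
  "extra_kernel_vec = (if cEE 2 = 0 then uE (a - 3)
     else cFE (a - b) \<cdot>\<^sub>v uE (a - 3) - cEE 2 \<cdot>\<^sub>v uF (b - 1))"

text \<open>The coordinate at which extra_kernel_vec is nonzero while uE (a - 1), uE (a - 2) vanish.\<close>
definition extra_pivot :: nat where
  "extra_pivot = (if cEE 2 = 0 then E (a - 3) else F (b - 1))"

lemma extra_kernel_vec_carrier: "extra_kernel_vec \<in> carrier_vec n"
  unfolding extra_kernel_vec_def by auto

lemma M_extra_kernel_vec: "M *\<^sub>v extra_kernel_vec = 0\<^sub>v n"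
proof (cases "cEE 2 = 0")
  case True
  then show ?thesis unfolding extra_kernel_vec_def using M_uE_third_last by (intro eq_vecI, auto)
next
  case False
  have "M *\<^sub>v extra_kernel_vec
      = M *\<^sub>v (cFE (a - b) \<cdot>\<^sub>v uE (a - 3)) - M *\<^sub>v (cEE 2 \<cdot>\<^sub>v uF (b - 1))"
    unfolding extra_kernel_vec_def using False by (simp add: mult_minus_distrib_mat_vec[OF M_carrier])
  also have "\<dots> = cFE (a - b) \<cdot>\<^sub>v (cEE 2 \<cdot>\<^sub>v uE (a - 1)) - cEE 2 \<cdot>\<^sub>v (cFE (a - b) \<cdot>\<^sub>v uE (a - 1))"
    unfolding mult_mat_vec[OF M_carrier uE_carrier] mult_mat_vec[OF M_carrier uF_carrier]
      M_uE_third_last M_uF_last ..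
  also have "\<dots> = 0\<^sub>v n" by (rule eq_vecI, auto)
  finally show ?thesis .
qed

lemma extra_kernel_vec_index:
  "i < n \<Longrightarrow> extra_kernel_vec $ i = (if cEE 2 = 0 then uE (a - 3) $ i
     else cFE (a - b) * uE (a - 3) $ i - cEE 2 * uF (b - 1) $ i)"
  unfolding extra_kernel_vec_def by simp

lemma extra_kernel_vec_coords:
  "extra_pivot < n" "extra_kernel_vec $ extra_pivot \<noteq> 0"
  "extra_kernel_vec $ E (a - 1) = 0" "extra_kernel_vec $ E (a - 2) = 0"
  "uE (a - 1) $ extra_pivot = 0" "uE (a - 2) $ extra_pivot = 0"
proof -
  note idx = last_indices
  have ne: "a - 3 \<noteq> a - 1" "a - 3 \<noteq> a - 2" "a - 1 \<noteq> a - 3" "a - 2 \<noteq> a - 3"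
    using long by auto
  show pivot: "extra_pivot < n" unfolding extra_pivot_def using E_lt F_lt idx by simp
  show "extra_kernel_vec $ extra_pivot \<noteq> 0"
    using extra_kernel_vec_index[OF pivot] uE_E[OF idx(3) idx(3)] uE_F[OF idx(3) idx(4)]
      uF_F[OF idx(4) idx(4)] unfolding extra_pivot_def by auto
  show "extra_kernel_vec $ E (a - 1) = 0"
    using extra_kernel_vec_index[OF E_lt[OF idx(1)]] uE_E[OF idx(3) idx(1)] uF_E[OF idx(4) idx(1)] ne
    by simp
  show "extra_kernel_vec $ E (a - 2) = 0"
    using extra_kernel_vec_index[OF E_lt[OF idx(2)]] uE_E[OF idx(3) idx(2)] uF_E[OF idx(4) idx(2)] ne
    by simp
  show "uE (a - 1) $ extra_pivot = 0" "uE (a - 2) $ extra_pivot = 0"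
    unfolding extra_pivot_def using uE_E[OF _ idx(3)] uE_F[OF _ idx(4)] idx ne by auto
qed

theorem three_le_kernel_dim: "3 \<le> kernel_dim M"
proof -
  interpret K: kernel n n M by (unfold_locales, rule M_carrier)
  let ?S = "{uE (a - 1), uE (a - 2), extra_kernel_vec}"
  have ne: "a - 1 \<noteq> a - 2" using long by auto
  have u: "uE (a - 1) $ E (a - 1) = 1" "uE (a - 1) $ E (a - 2) = 0"
    "uE (a - 2) $ E (a - 2) = 1" "uE (a - 2) $ E (a - 1) = 0"
    using uE_E last_indices ne by auto
  note x = extra_kernel_vec_coords
  have S: "?S \<subseteq> mat_kernel M"
    using M_uE_last M_uE_before_last M_extra_kernel_vec extra_kernel_vec_carrier
    by (auto intro!: mat_kernelI[OF M_carrier])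
  have "card ?S \<le> kernel_dim M"
  proof (rule K.card_le_kernel_dim[OF S])
    fix v assume "v \<in> ?S"
    then consider "v = uE (a - 1)" | "v = uE (a - 2)" | "v = extra_kernel_vec" by blast
    then show "\<exists>i<n. v $ i \<noteq> 0 \<and> (\<forall>w\<in>?S. w \<noteq> v \<longrightarrow> w $ i = 0)"
    proof cases
      case 1
      then show ?thesis using u x E_lt[OF last_indices(1)] by (intro exI[of _ "E (a - 1)"]) auto
    next
      case 2
      then show ?thesis using u x E_lt[OF last_indices(2)] by (intro exI[of _ "E (a - 2)"]) auto
    next
      case 3
      then show ?thesis using u x by (intro exI[of _ extra_pivot]) auto
    qed
  qed
  moreover have "uE (a - 1) \<noteq> uE (a - 2)" "extra_kernel_vec \<noteq> uE (a - 1)"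
    "extra_kernel_vec \<noteq> uE (a - 2)"
    using u x by (metis zero_neq_one)+
  then have "card ?S = 3" by auto
  ultimately show ?thesis by simp
qed

end

lemma similar_to_two_block_jordan:
  fixes X :: "'a :: field mat"
  assumes sim: "similar_mat X (jordan_matrix [(p, 0), (q, 0)])" and X: "X \<in> carrier_mat n n"
    and p: "1 \<le> p" and q: "1 \<le> q"
  shows "nilpotent_mat n X" "has_shape X {#p, q#}"
proof -
  from sim obtain P Q where wit: "similar_mat_wit X (jordan_matrix [(p, 0), (q, 0)]) P Q"
    unfolding similar_mat_def by auto
  have J: "jordan_matrix [(p, 0 :: 'a), (q, 0)] \<in> carrier_mat n n"
    and P: "P \<in> carrier_mat n n" and Q: "Q \<in> carrier_mat n n"
    by (rule similar_mat_witD2[OF X wit])+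
  have "X ^\<^sub>m (p + q) = P * jordan_matrix [(p, 0), (q, 0)] ^\<^sub>m (p + q) * Q"
    by (rule similar_mat_wit_pow_id[OF wit])
  also have "jordan_matrix [(p, 0 :: 'a), (q, 0)] ^\<^sub>m (p + q) = 0\<^sub>m (p + q) (p + q)"
    by (rule nilpotent_two_block_pow_zero) auto
  finally have "X ^\<^sub>m (p + q) = 0\<^sub>m n n" using J P Q by auto
  then show "nilpotent_mat n X" unfolding nilpotent_mat_def using X by blast
  show "has_shape X {#p, q#}"
    unfolding has_shape_def jordan_nf_def using sim p q
    by (intro exI[of _ "[(p, 0), (q, 0)]"]) auto
qed


section \<open>The "only if" direction\<close>

text \<open>A matrix commuting with the nilpotent Jordan matrix with blocks of sizes a and b (in
  either order) and vanishing from the power a - 1 on has kernel dimension at least 3 when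
  a \<ge> b + 3.  The blocks, read backwards, are the two chains of the locale long_chain.\<close>
lemma two_block_commutant_kernel_dim:
  fixes M :: "'a :: field mat"
  assumes pq: "(p = a \<and> q = b) \<or> (p = b \<and> q = a)"
    and n: "n = a + b" and M: "M \<in> carrier_mat n n"
    and comm: "M * jordan_matrix [(p, 0), (q, 0)] = jordan_matrix [(p, 0), (q, 0)] * M"
    and b: "1 \<le> b" and long: "b + 3 \<le> a" and nil: "M ^\<^sub>m (a - 1) = 0\<^sub>m n n"
  shows "3 \<le> kernel_dim M"
proof -
  let ?J = "jordan_matrix [(p, 0 :: 'a), (q, 0)]"
  define sa where "sa = (if p = a then 0 else b)"
  define sb where "sb = (if p = a then a else 0)"
  have pqn: "n = p + q" using pq n by auto
  have blocks: "(sa, a) = (0, p) \<or> (sa, a) = (p, q)" "(sb, b) = (0, p) \<or> (sb, b) = (p, q)"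
    using pq long unfolding sa_def sb_def by auto
  interpret long_chain n a b "\<lambda>i. sa + a - 1 - i" "\<lambda>i. sb + b - 1 - i" ?J M
  proof unfold_locales
    fix w :: "'a vec" and k assume "w \<in> carrier_vec n" "k < a"
    then show "(?J *\<^sub>v w) $ (sa + a - 1 - k) = (if k = 0 then 0 else w $ (sa + a - 1 - (k - 1)))"
      using two_block_jordan_chain[of w p q sa a k] blocks pqn by auto
  next
    fix w :: "'a vec" and k assume "w \<in> carrier_vec n" "k < b"
    then show "(?J *\<^sub>v w) $ (sb + b - 1 - k) = (if k = 0 then 0 else w $ (sb + b - 1 - (k - 1)))"
      using two_block_jordan_chain[of w p q sb b k] blocks pqn by auto
  qed (use n pqn M comm b long nil pq in \<open>auto simp: sa_def sb_def split: if_splits\<close>)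
  show ?thesis by (rule three_le_kernel_dim)
qed

lemma commuting_shapes_longer_part:
  fixes A B :: "'a :: field mat"
  assumes nB: "nilpotent_mat n B" and nA: "nilpotent_mat n A" and comm: "B * A = A * B"
    and sB: "has_shape B {#a, b#}" and sA: "has_shape A {#c, d#}"
    and ab: "b \<le> a" "1 \<le> b" and cd: "d \<le> c" "1 \<le> d" and n: "a + b = n" "c + d = n"
    and ca: "c < a"
  shows "a = b + 2 \<and> c = d"
proof -
  have "\<not> b + 3 \<le> a"
  proof
    assume long: "b + 3 \<le> a"
    obtain p q P Q where wit: "similar_mat_wit B (jordan_matrix [(p, 0), (q, 0)]) P Q"
      and pq: "(p = a \<and> q = b) \<or> (p = b \<and> q = a)"
      by (rule two_part_shapeE[OF nB sB]) (use ab in auto)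
    from nB nA have B: "B \<in> carrier_mat n n" and A: "A \<in> carrier_mat n n"
      unfolding nilpotent_mat_def by auto
    have P: "P \<in> carrier_mat n n" and Q: "Q \<in> carrier_mat n n"
      by (rule similar_mat_witD2[OF B wit])+
    let ?M = "Q * A * P"
    have witM: "similar_mat_wit ?M A Q P"
      using similar_mat_witD2[OF B wit] A unfolding similar_mat_wit_def Let_def by auto
    have "A ^\<^sub>m (a - 1) = 0\<^sub>m n n"
      by (rule two_part_shape_pow_zero[OF nA sA]) (use ca cd in auto)
    then have nilM: "?M ^\<^sub>m (a - 1) = 0\<^sub>m n n"
      unfolding similar_mat_wit_pow_id[OF witM] using Q P by simp
    have "kernel_dim ?M = kernel_dim A"
      using similar_mat_wit_kernel_dim[OF _ witM] P Q A unfolding kernel_dim_def by simp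
    also have "\<dots> = 2" by (rule two_part_shape_kernel_dim[OF nA sA]) (use cd in auto)
    finally have "kernel_dim ?M = 2" .
    moreover have "3 \<le> kernel_dim ?M"
      by (rule two_block_commutant_kernel_dim[OF pq])
        (use n ab long nilM similar_mat_wit_commute[OF wit B A comm] P Q A in auto)
    ultimately show False by simp
  qed
  then show ?thesis using ab cd n ca by arith
qed

lemma commuting_two_part_shapes:
  fixes A B :: "'a :: field mat"
  assumes "nilpotent_mat n B" "nilpotent_mat n A" "B * A = A * B"
    and "has_shape B {#l1, l2#}" "has_shape A {#m1, m2#}"
    and "l2 \<le> l1" "1 \<le> l2" "l1 + l2 = n" "m2 \<le> m1" "1 \<le> m2" "m1 + m2 = n"
    and "(l1, l2) \<noteq> (m1, m2)"
  shows "(l1 = l2 + 2 \<and> m1 = m2) \<or> (m1 = m2 + 2 \<and> l1 = l2)"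
proof -
  consider "m1 < l1" | "l1 < m1" using assms(8,11,12) by fastforce
  then show ?thesis
  proof cases
    case 1
    then show ?thesis using commuting_shapes_longer_part[OF assms(1-5)] assms(6-11) by blast
  next
    case 2
    then show ?thesis
      using commuting_shapes_longer_part[OF assms(2,1) assms(3)[symmetric] assms(5,4)] assms(6-11)
      by blast
  qed
qed


section \<open>The explicit construction\<close>

text \<open>The matrix conj_P has as
  columns a Jordan basis of A for blocks of sizes k + 1 and k - 1; conj_Q is its inverse.\<close>
context
  fixes k :: nat and n :: nat
  assumes k2: "k \<ge> 2" and n: "n = 2 * k"
begin

definition conj_P :: "'a :: field_char_0 mat" where
  "conj_P = mat n n (\<lambda>(r, c). if r < k
     then (if c = r then of_nat (k - r) else 0) + (if c = k + r then - of_nat r else 0)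
     else (if c = r - k + 1 then 1 else 0) + (if c = r + 1 then (if r + 2 \<le> n then 1 else 0) else 0))"

definition conj_Q :: "'a :: field_char_0 mat" where
  "conj_Q = mat n n (\<lambda>(r, c). if r < k then (if c = r then 1 / of_nat k else 0)
        + (if c = k + r - 1 then (if 1 \<le> r then of_nat r / of_nat k else 0) else 0)
     else if r = k then (if c = n - 1 then 1 else 0)
     else (if c = r - k then - 1 / of_nat k else 0) + (if c = r - 1 then of_nat (n - r) / of_nat k else 0))"

definition shift_N :: "'a :: field_char_0 mat" where
  "shift_N = mat n n (\<lambda>(r, c). if c = r + k then (if r < k then 1 else 0) else 0)"

abbreviation "double_block \<equiv> jordan_matrix [(k, 0 :: 'a :: field_char_0), (k, 0)]"
abbreviation "target_jordan \<equiv> jordan_matrix [(k + 1, 0 :: 'a :: field_char_0), (k - 1, 0)]"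

lemma n_eq: "n = k + k" "k + 1 + (k - 1) = n" using n k2 by auto

lemma k_nonzero: "(of_nat k :: 'a :: field_char_0) \<noteq> 0" using k2 by simp

lemma double_block_carrier: "double_block \<in> carrier_mat n n"
  using jordan_matrix_carrier[of "[(k, 0 :: 'a), (k, 0)]"] n_eq by simp
lemma target_jordan_carrier: "target_jordan \<in> carrier_mat n n"
  using jordan_matrix_carrier[of "[(k + 1, 0 :: 'a), (k - 1, 0)]"] n_eq by simp
lemma conj_P_carrier: "conj_P \<in> carrier_mat n n" unfolding conj_P_def by simp
lemma conj_Q_carrier: "conj_Q \<in> carrier_mat n n" unfolding conj_Q_def by simp
lemma shift_N_carrier: "shift_N \<in> carrier_mat n n" unfolding shift_N_def by simp

lemma conj_P_mult_vec:
  assumes w: "w \<in> carrier_vec n" and r: "r < n"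
  shows "(conj_P *\<^sub>v w) $ r = (if r < k then of_nat (k - r) * w $ r - of_nat r * w $ (k + r)
     else w $ (r - k + 1) + (if r + 2 \<le> n then w $ (r + 1) else 0))"
  unfolding conj_P_def mat_mult_vec_index[OF r w] using r n k2
  by (simp add: distrib_right sum.distrib if_distrib[of "\<lambda>x. x * _"] cong: if_cong) arith

lemma conj_Q_mult_vec:
  assumes w: "w \<in> carrier_vec n" and r: "r < n"
  shows "(conj_Q *\<^sub>v w) $ r = (if r < k then (w $ r + (if 1 \<le> r then of_nat r * w $ (k + r - 1) else 0)) / of_nat k
     else if r = k then w $ (n - 1)
     else (- w $ (r - k) + of_nat (n - r) * w $ (r - 1)) / of_nat k)"
proof -
  have e: "(conj_Q *\<^sub>v w) $ r = (\<Sum>j<n. (if r < k then (if j = r then 1 / of_nat k else 0)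
        + (if j = k + r - 1 then (if 1 \<le> r then of_nat r / of_nat k else 0) else 0)
     else if r = k then (if j = n - 1 then 1 else 0)
     else (if j = r - k then - 1 / of_nat k else 0) + (if j = r - 1 then of_nat (n - r) / of_nat k else 0)) * w $ j)"
    unfolding conj_Q_def mat_mult_vec_index[OF r w] by (simp only: prod.case)
  consider "r < k" | "r = k" | "k < r" by linarith
  then show ?thesis
  proof cases
    case 1
    have "(conj_Q *\<^sub>v w) $ r = (\<Sum>j<n. ((if j = r then 1 / of_nat k else 0)
        + (if j = k + r - 1 then (if 1 \<le> r then of_nat r / of_nat k else 0) else 0)) * w $ j)"
      unfolding e using 1 by simp
    also have "\<dots> = 1 / of_nat k * w $ r + (if 1 \<le> r then of_nat r / of_nat k else 0) * w $ (k + r - 1)"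
      by (rule sum_two_deltas, use 1 n k2 in auto)
    finally show ?thesis using 1 by (simp add: add_divide_distrib)
  next
    case 2
    have "(conj_Q *\<^sub>v w) $ r = (\<Sum>j<n. ((if j = n - 1 then 1 else 0) + (if j = n - 1 then 0 else 0)) * w $ j)"
      unfolding e using 2 by simp
    also have "\<dots> = 1 * w $ (n - 1) + 0 * w $ (n - 1)"
      by (rule sum_two_deltas, use n k2 in auto)
    finally show ?thesis using 2 by simp
  next
    case 3
    have "(conj_Q *\<^sub>v w) $ r = (\<Sum>j<n. ((if j = r - k then - 1 / of_nat k else 0)
        + (if j = r - 1 then of_nat (n - r) / of_nat k else 0)) * w $ j)"
      unfolding e using 3 by simp
    also have "\<dots> = - 1 / of_nat k * w $ (r - k) + of_nat (n - r) / of_nat k * w $ (r - 1)"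
      by (rule sum_two_deltas, use r n k2 in auto)
    finally show ?thesis using 3 by (simp add: add_divide_distrib diff_divide_distrib)
  qed
qed

lemma shift_N_mult_vec:
  assumes w: "w \<in> carrier_vec n" and r: "r < n"
  shows "(shift_N *\<^sub>v w) $ r = (if r < k then w $ (r + k) else 0)"
  unfolding shift_N_def mat_mult_vec_index[OF r w] using r n k2
  by (simp add: if_distrib[of "\<lambda>x. x * _"] cong: if_cong)

lemma double_block_mult_vec:
  assumes w: "w \<in> carrier_vec n" and r: "r < n"
  shows "(double_block *\<^sub>v w) $ r = (if Suc r < n \<and> Suc r \<noteq> k then w $ Suc r else 0)"
  using two_block_jordan_mult_vec[of w k k r "0::'a" 0] w r n_eq by simp

lemma target_jordan_mult_vec:
  assumes w: "w \<in> carrier_vec n" and r: "r < n"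
  shows "(target_jordan *\<^sub>v w) $ r = (if Suc r < n \<and> Suc r \<noteq> k + 1 then w $ Suc r else 0)"
  using two_block_jordan_mult_vec[of w "k + 1" "k - 1" r "0::'a" 0] w r unfolding n_eq(2) by simp

lemma conj_P_conj_Q_top:
  assumes w: "w \<in> carrier_vec n" and r: "r < k"
  shows "(conj_P *\<^sub>v (conj_Q *\<^sub>v w)) $ r = (w $ r :: 'a :: field_char_0)"
proof -
  have P: "(conj_P *\<^sub>v (conj_Q *\<^sub>v w)) $ r
      = of_nat (k - r) * (conj_Q *\<^sub>v w) $ r - of_nat r * (conj_Q *\<^sub>v w) $ (k + r)"
    using conj_P_mult_vec[OF mult_mat_vec_carrier[OF conj_Q_carrier w], of r] r n by simp
  show ?thesis
  proof (cases "r = 0")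
    case True
    have "(conj_Q *\<^sub>v w) $ 0 = w $ 0 / of_nat k" using conj_Q_mult_vec[OF w, of 0] n k2 by simp
    then show ?thesis unfolding P using True k_nonzero by simp
  next
    case False
    have q1: "(conj_Q *\<^sub>v w) $ r = (w $ r + of_nat r * w $ (k + r - 1)) / of_nat k"
      using conj_Q_mult_vec[OF w, of r] r n False by simp
    have q2: "(conj_Q *\<^sub>v w) $ (k + r) = (- w $ r + of_nat (k - r) * w $ (k + r - 1)) / of_nat k"
      using conj_Q_mult_vec[OF w, of "k + r"] r False n by simp
    have kr: "(of_nat (k - r) :: 'a) = of_nat k - of_nat r" using r by simp
    have "(conj_P *\<^sub>v (conj_Q *\<^sub>v w)) $ r
        = (of_nat k - of_nat r) * ((w $ r + of_nat r * w $ (k + r - 1)) / of_nat k)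
          - of_nat r * ((- w $ r + (of_nat k - of_nat r) * w $ (k + r - 1)) / of_nat k)"
      unfolding P q1 q2 kr ..
    also have "\<dots> = (of_nat k * w $ r) / of_nat k" by (simp add: field_simps)
    also have "\<dots> = w $ r" using k_nonzero by simp
    finally show ?thesis .
  qed
qed

lemma conj_P_conj_Q_bottom:
  assumes w: "w \<in> carrier_vec n" and r: "k \<le> r" "r < n"
  shows "(conj_P *\<^sub>v (conj_Q *\<^sub>v w)) $ r = (w $ r :: 'a :: field_char_0)"
proof -
  have P: "(conj_P *\<^sub>v (conj_Q *\<^sub>v w)) $ r
      = (conj_Q *\<^sub>v w) $ (r - k + 1) + (if r + 2 \<le> n then (conj_Q *\<^sub>v w) $ (r + 1) else 0)"
    using conj_P_mult_vec[OF mult_mat_vec_carrier[OF conj_Q_carrier w] r(2)] r by simp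
  show ?thesis
  proof (cases "r + 2 \<le> n")
    case True
    have q1: "(conj_Q *\<^sub>v w) $ (r - k + 1) = (w $ (r - k + 1) + of_nat (r - k + 1) * w $ r) / of_nat k"
    proof -
      have l: "r - k + 1 < k" "1 \<le> r - k + 1" "k + (r - k + 1) - 1 = r" "r - k + 1 < n"
        using True r n by arith+
      show ?thesis using conj_Q_mult_vec[OF w l(4)] l by simp
    qed
    have q2: "(conj_Q *\<^sub>v w) $ (r + 1) = (- w $ (r - k + 1) + of_nat (n - (r + 1)) * w $ r) / of_nat k"
    proof -
      have l: "\<not> r + 1 < k" "r + 1 \<noteq> k" "r + 1 - k = r - k + 1" "r + 1 - 1 = r" "r + 1 < n"
        using True r n by arith+
      show ?thesis using conj_Q_mult_vec[OF w l(5)] l by simp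
    qed
    have s: "(of_nat (r - k + 1) :: 'a) + of_nat (n - (r + 1)) = of_nat k"
      unfolding of_nat_add[symmetric] using True r n by simp
    have "(conj_P *\<^sub>v (conj_Q *\<^sub>v w)) $ r
        = ((w $ (r - k + 1) + of_nat (r - k + 1) * w $ r) + (- w $ (r - k + 1) + of_nat (n - (r + 1)) * w $ r))
          / of_nat k"
      unfolding P q1 q2 if_P[OF True] by (rule add_divide_distrib[symmetric])
    also have "\<dots> = (of_nat (r - k + 1) + of_nat (n - (r + 1))) * w $ r / of_nat k"
      by (simp add: algebra_simps)
    finally show ?thesis unfolding s using k_nonzero by simp
  next
    case False
    then have "r = n - 1" "r - k + 1 = k" using r n by auto
    then show ?thesis unfolding P using False conj_Q_mult_vec[OF w, of k] n k2 by simp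
  qed
qed

lemma conj_P_conj_Q: "conj_P * conj_Q = (1\<^sub>m n :: 'a :: field_char_0 mat)"
proof (rule eq_mat_by_mult_vec)
  fix w :: "'a vec" assume w: "w \<in> carrier_vec n"
  have "conj_P *\<^sub>v (conj_Q *\<^sub>v w) = w"
  proof (rule eq_vecI)
    fix r assume "r < dim_vec w"
    then show "(conj_P *\<^sub>v (conj_Q *\<^sub>v w)) $ r = w $ r"
      using w conj_P_conj_Q_top[OF w] conj_P_conj_Q_bottom[OF w] by (cases "r < k") auto
  qed (use w conj_P_carrier[where 'a='a] in auto)
  then show "(conj_P * conj_Q) *\<^sub>v w = 1\<^sub>m n *\<^sub>v w"
    using assoc_mult_mat_vec[OF conj_P_carrier conj_Q_carrier w] w by simp
qed (use mult_carrier_mat[OF conj_P_carrier conj_Q_carrier] in auto)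

lemma perturbed_conj_top:
  assumes w: "w \<in> carrier_vec n" and r: "r < k"
  shows "(double_block *\<^sub>v (conj_P *\<^sub>v w)) $ r + (shift_N *\<^sub>v (conj_P *\<^sub>v w)) $ r
    = (conj_P *\<^sub>v (target_jordan *\<^sub>v w)) $ r"
proof -
  have Pw: "(conj_P :: 'a mat) *\<^sub>v w \<in> carrier_vec n" by (rule mult_mat_vec_carrier[OF conj_P_carrier w])
  have Jw: "(target_jordan :: 'a mat) *\<^sub>v w \<in> carrier_vec n"
    by (rule mult_mat_vec_carrier[OF target_jordan_carrier w])
  have rn: "r < n" using r n by simp
  note B = double_block_mult_vec[OF Pw rn] and N = shift_N_mult_vec[OF Pw rn]
    and P = conj_P_mult_vec[OF Jw rn]
  have Nk: "(conj_P *\<^sub>v w) $ (r + k) = w $ (r + 1) + (if r + k + 2 \<le> n then w $ (r + k + 1) else 0)"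
    using conj_P_mult_vec[OF w, of "r + k"] r n by (simp add: Suc_diff_le)
  have J1: "(target_jordan *\<^sub>v w) $ r = w $ (r + 1)" using target_jordan_mult_vec[OF w rn] r n by simp
  have J2: "(target_jordan *\<^sub>v w) $ (k + r) = (if r + 1 < k \<and> r \<noteq> 0 then w $ (k + r + 1) else 0)"
    using target_jordan_mult_vec[OF w, of "k + r"] r n by auto
  show ?thesis
  proof (cases "r + 1 < k")
    case True
    have P1: "(conj_P *\<^sub>v w) $ Suc r = of_nat (k - (r + 1)) * w $ (r + 1) - of_nat (r + 1) * w $ (k + (r + 1))"
      using conj_P_mult_vec[OF w, of "r + 1"] True n by simp
    have c: "(of_nat (k - (r + 1)) :: 'a) = of_nat k - of_nat r - 1"
      "(of_nat (k - r) :: 'a) = of_nat k - of_nat r"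
      using True by simp_all
    have nn: "r + k + 2 \<le> n" using True n by simp
    show ?thesis using r True n unfolding B N P P1 Nk J1 J2 c
      by (cases "r = 0") (auto simp: algebra_simps nn)
  next
    case False
    then have rk: "r = k - 1" "Suc r = k" "k - r = 1" using r by auto
    have nn: "\<not> r + k + 2 \<le> n" using rk n k2 by simp
    have J2': "(target_jordan *\<^sub>v w) $ (k + r) = 0" using J2 False by simp
    show ?thesis using r rk n unfolding B N P Nk J1 J2' by (simp add: nn)
  qed
qed

lemma perturbed_conj_bottom:
  assumes w: "w \<in> carrier_vec n" and r: "k \<le> r" "r < n"
  shows "(double_block *\<^sub>v (conj_P *\<^sub>v w)) $ r + (shift_N *\<^sub>v (conj_P *\<^sub>v w)) $ r
    = (conj_P *\<^sub>v (target_jordan *\<^sub>v w)) $ r"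
proof -
  have Pw: "(conj_P :: 'a mat) *\<^sub>v w \<in> carrier_vec n" by (rule mult_mat_vec_carrier[OF conj_P_carrier w])
  have Jw: "(target_jordan :: 'a mat) *\<^sub>v w \<in> carrier_vec n"
    by (rule mult_mat_vec_carrier[OF target_jordan_carrier w])
  note B = double_block_mult_vec[OF Pw r(2)] and N = shift_N_mult_vec[OF Pw r(2)]
    and P = conj_P_mult_vec[OF Jw r(2)]
  show ?thesis
  proof (cases "r + 1 < n")
    case True
    have P1: "(conj_P *\<^sub>v w) $ Suc r = w $ (r - k + 2) + (if r + 3 \<le> n then w $ (r + 2) else 0)"
      using conj_P_mult_vec[OF w, of "r + 1"] True r by (simp add: Suc_diff_le numeral_3_eq_3)
    have J1: "(target_jordan *\<^sub>v w) $ (r - k + 1) = w $ (r - k + 2)"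
      using target_jordan_mult_vec[OF w, of "r - k + 1"] True r n by (auto simp: Suc_diff_le)
    have J2: "(target_jordan *\<^sub>v w) $ (r + 1) = (if r + 2 < n then w $ (r + 2) else 0)"
      using target_jordan_mult_vec[OF w, of "r + 1"] True r n by auto
    show ?thesis using True r n unfolding B N P P1 J1 J2 by auto
  next
    case False
    then have rn: "r = n - 1" "r - k + 1 = k" using r n by auto
    have J1: "(target_jordan *\<^sub>v w) $ (r - k + 1) = 0" using target_jordan_mult_vec[OF w, of k] rn n k2 by simp
    show ?thesis using False r rn n unfolding B N P J1 by auto
  qed
qed

lemma perturbed_conj: "(double_block + shift_N) * conj_P = conj_P * (target_jordan :: 'a :: field_char_0 mat)"
proof (rule eq_mat_by_mult_vec)
  note carriers = double_block_carrier[where 'a='a] shift_N_carrier[where 'a='a]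
    conj_P_carrier[where 'a='a] target_jordan_carrier[where 'a='a]
  have A: "(double_block + shift_N :: 'a mat) \<in> carrier_mat n n" using carriers by simp
  show "((double_block + shift_N) * conj_P :: 'a mat) \<in> carrier_mat n n"
    "(conj_P * target_jordan :: 'a mat) \<in> carrier_mat n n"
    using A carriers by auto
  fix w :: "'a vec" assume w: "w \<in> carrier_vec n"
  have Pw: "conj_P *\<^sub>v w \<in> carrier_vec n" by (rule mult_mat_vec_carrier[OF conj_P_carrier w])
  have "double_block *\<^sub>v (conj_P *\<^sub>v w) + shift_N *\<^sub>v (conj_P *\<^sub>v w) = conj_P *\<^sub>v (target_jordan *\<^sub>v w)"
  proof (rule eq_vecI)
    fix r assume "r < dim_vec (conj_P *\<^sub>v (target_jordan *\<^sub>v w))"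
    then have r: "r < n" using conj_P_carrier[where 'a='a] by simp
    then have "(double_block *\<^sub>v (conj_P *\<^sub>v w) + shift_N *\<^sub>v (conj_P *\<^sub>v w)) $ r
        = (double_block *\<^sub>v (conj_P *\<^sub>v w)) $ r + (shift_N *\<^sub>v (conj_P *\<^sub>v w)) $ r"
      using shift_N_carrier[where 'a='a] by simp
    also have "\<dots> = (conj_P *\<^sub>v (target_jordan *\<^sub>v w)) $ r"
    proof (cases "r < k")
      case True
      then show ?thesis by (rule perturbed_conj_top[OF w])
    next
      case False
      then show ?thesis using r by (intro perturbed_conj_bottom[OF w]) auto
    qed
    finally show "(double_block *\<^sub>v (conj_P *\<^sub>v w) + shift_N *\<^sub>v (conj_P *\<^sub>v w)) $ r
        = (conj_P *\<^sub>v (target_jordan *\<^sub>v w)) $ r" .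
  qed (use conj_P_carrier[where 'a='a] shift_N_carrier[where 'a='a] in simp)
  then show "((double_block + shift_N) * conj_P) *\<^sub>v w = (conj_P * target_jordan) *\<^sub>v w"
    using assoc_mult_mat_vec[OF A carriers(3) w]
      add_mult_distrib_mat_vec[OF carriers(1,2) Pw] assoc_mult_mat_vec[OF carriers(3,4) w]
    by simp
qed

text \<open>N is the shift between the two equal blocks, so it commutes with B.\<close>
lemma double_block_shift_N_commute: "double_block * shift_N = shift_N * (double_block :: 'a :: field_char_0 mat)"
proof (rule eq_mat_by_mult_vec)
  fix w :: "'a vec" assume w: "w \<in> carrier_vec n"
  have Nw: "shift_N *\<^sub>v w \<in> carrier_vec n" by (rule mult_mat_vec_carrier[OF shift_N_carrier w])
  have Bw: "double_block *\<^sub>v w \<in> carrier_vec n" by (rule mult_mat_vec_carrier[OF double_block_carrier w])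
  have "double_block *\<^sub>v (shift_N *\<^sub>v w) = shift_N *\<^sub>v (double_block *\<^sub>v w)"
  proof (rule eq_vecI)
    fix r assume "r < dim_vec (shift_N *\<^sub>v (double_block *\<^sub>v w))"
    then have r: "r < n" using shift_N_carrier[where 'a='a] by simp
    show "(double_block *\<^sub>v (shift_N *\<^sub>v w)) $ r = (shift_N *\<^sub>v (double_block *\<^sub>v w)) $ r"
      unfolding double_block_mult_vec[OF Nw r] shift_N_mult_vec[OF Bw r]
      using shift_N_mult_vec[OF w, of "Suc r"] double_block_mult_vec[OF w, of "r + k"] r n by auto
  qed (use shift_N_carrier[where 'a='a] n_eq in simp)
  then show "(double_block * shift_N) *\<^sub>v w = (shift_N * double_block) *\<^sub>v w"
    using assoc_mult_mat_vec[OF double_block_carrier shift_N_carrier w]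
      assoc_mult_mat_vec[OF shift_N_carrier double_block_carrier w] by simp
qed (use mult_carrier_mat[OF double_block_carrier shift_N_carrier]
      mult_carrier_mat[OF shift_N_carrier double_block_carrier] in auto)

lemma perturbed_similar: "similar_mat (double_block + shift_N) (target_jordan :: 'a :: field_char_0 mat)"
proof -
  note carriers = double_block_carrier[where 'a='a] shift_N_carrier[where 'a='a]
    conj_P_carrier[where 'a='a] conj_Q_carrier[where 'a='a] target_jordan_carrier[where 'a='a]
  have QP: "conj_Q * conj_P = (1\<^sub>m n :: 'a mat)"
    by (rule mat_mult_left_right_inverse[OF conj_P_carrier conj_Q_carrier conj_P_conj_Q])
  have "(double_block + shift_N :: 'a mat) = (double_block + shift_N) * (conj_P * conj_Q)"
    unfolding conj_P_conj_Q using carriers by simp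
  also have "\<dots> = conj_P * target_jordan * conj_Q"
    unfolding perturbed_conj[symmetric] using carriers by (simp add: assoc_mult_mat[of _ n n _ n _ n])
  finally have "similar_mat_wit (double_block + shift_N :: 'a mat) target_jordan conj_P conj_Q"
    unfolding similar_mat_wit_def Let_def using carriers conj_P_conj_Q QP by auto
  then show ?thesis unfolding similar_mat_def by blast
qed

lemma commuting_pair_exists:
  "\<exists>B A :: 'a :: field_char_0 mat. nilpotent_mat n B \<and> nilpotent_mat n A \<and> B * A = A * B
     \<and> has_shape B {#k, k#} \<and> has_shape A {#k + 1, k - 1#}"
proof -
  let ?B = "double_block :: 'a mat"
  let ?A = "double_block + shift_N :: 'a mat"
  note carriers = double_block_carrier[where 'a='a] shift_N_carrier[where 'a='a]
  have A: "?A \<in> carrier_mat n n" using carriers by simp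
  have "nilpotent_mat n ?B" "has_shape ?B {#k, k#}"
    using similar_to_two_block_jordan[OF similar_mat_refl[OF carriers(1)] carriers(1)] k2 by auto
  moreover have "nilpotent_mat n ?A" "has_shape ?A {#k + 1, k - 1#}"
    using similar_to_two_block_jordan[OF perturbed_similar A] k2 by auto
  moreover have "?B * ?A = ?A * ?B"
  proof -
    have "?B * ?A = ?B * ?B + ?B * shift_N" by (rule mult_add_distrib_mat[OF carriers(1,1,2)])
    also have "\<dots> = ?B * ?B + shift_N * ?B" by (simp only: double_block_shift_N_commute)
    also have "\<dots> = ?A * ?B" by (rule add_mult_distrib_mat[OF carriers(1,2,1), symmetric])
    finally show ?thesis .
  qed
  ultimately show ?thesis by blast
qed

end


lemma two_part_shapes_arith:
  fixes n l1 l2 m1 m2 :: nat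
  assumes "1 \<le> l2" "l1 + l2 = n" "1 \<le> m2" "m1 + m2 = n"
  shows "((l1 = l2 + 2 \<and> m1 = m2) \<or> (m1 = m2 + 2 \<and> l1 = l2)) \<longleftrightarrow> (even n \<and>
          (((l1, l2) = (n div 2, n div 2) \<and> (m1, m2) = (n div 2 + 1, n div 2 - 1)) \<or>
           ((m1, m2) = (n div 2, n div 2) \<and> (l1, l2) = (n div 2 + 1, n div 2 - 1))))"
proof -
  have longer: "(l1 = l2 + 2 \<and> m1 = m2) \<longleftrightarrow>
      (even n \<and> (m1, m2) = (n div 2, n div 2) \<and> (l1, l2) = (n div 2 + 1, n div 2 - 1))"
    if "1 \<le> l2" "l1 + l2 = n" "1 \<le> m2" "m1 + m2 = n" for l1 l2 m1 m2 :: nat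
  proof
    assume h: "l1 = l2 + 2 \<and> m1 = m2"
    then have "n = 2 * m1" "l2 = m1 - 1" using that by auto
    then show "even n \<and> (m1, m2) = (n div 2, n div 2) \<and> (l1, l2) = (n div 2 + 1, n div 2 - 1)"
      using h that by auto
  qed (use that in auto)
  show ?thesis using longer[OF assms] longer[OF assms(3,4,1,2)] by blast
qed

lemma commuting_pair_with_shapes:
  fixes n l1 l2 m1 m2 :: nat
  assumes "1 \<le> l2" "l1 + l2 = n" "1 \<le> m2" "m1 + m2 = n"
    and "(l1 = l2 + 2 \<and> m1 = m2) \<or> (m1 = m2 + 2 \<and> l1 = l2)"
  shows "\<exists>B A :: 'a :: field_char_0 mat. nilpotent_mat n B \<and> nilpotent_mat n A \<and> B * A = A * B
      \<and> has_shape B {#l1, l2#} \<and> has_shape A {#m1, m2#}"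
  using assms(5)
proof
  assume "l1 = l2 + 2 \<and> m1 = m2"
  then have k: "2 \<le> m1" "n = 2 * m1" and shapes: "l1 = m1 + 1" "l2 = m1 - 1" "m2 = m1"
    using assms(1,2,4) by auto
  from commuting_pair_exists[OF k, where 'a='a] obtain B A :: "'a mat" where
    "nilpotent_mat n B" "nilpotent_mat n A" "B * A = A * B"
    "has_shape B {#m1, m1#}" "has_shape A {#m1 + 1, m1 - 1#}" by blast
  then show ?thesis unfolding shapes by (intro exI[of _ A] exI[of _ B]) auto
next
  assume "m1 = m2 + 2 \<and> l1 = l2"
  then have k: "2 \<le> l1" "n = 2 * l1" and shapes: "m1 = l1 + 1" "m2 = l1 - 1" "l2 = l1"
    using assms(2,3,4) by auto
  from commuting_pair_exists[OF k, where 'a='a] show ?thesis unfolding shapes .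
qed

theorem theorem3p1:
  fixes n l1 l2 m1 m2 :: nat
  assumes "alg_closed_field TYPE('a :: field_char_0)"
    and "l1 \<ge> l2" "l2 \<ge> 1" "l1 + l2 = n"
    and "m1 \<ge> m2" "m2 \<ge> 1" "m1 + m2 = n"
    and "(l1, l2) \<noteq> (m1, m2)"
  shows "(\<exists>B A :: 'a mat. nilpotent_mat n B \<and> nilpotent_mat n A \<and> B * A = A * B
            \<and> has_shape B {#l1, l2#} \<and> has_shape A {#m1, m2#})
     \<longleftrightarrow> (even n \<and>
          (((l1, l2) = (n div 2, n div 2) \<and> (m1, m2) = (n div 2 + 1, n div 2 - 1)) \<or>
           ((m1, m2) = (n div 2, n div 2) \<and> (l1, l2) = (n div 2 + 1, n div 2 - 1))))"
  unfolding two_part_shapes_arith[OF assms(3,4,6,7), symmetric]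
proof
  assume "\<exists>B A :: 'a mat. nilpotent_mat n B \<and> nilpotent_mat n A \<and> B * A = A * B
            \<and> has_shape B {#l1, l2#} \<and> has_shape A {#m1, m2#}"
  then obtain B A :: "'a mat" where "nilpotent_mat n B" "nilpotent_mat n A" "B * A = A * B"
    "has_shape B {#l1, l2#}" "has_shape A {#m1, m2#}" by blast
  from commuting_two_part_shapes[OF this assms(2-8)]
  show "(l1 = l2 + 2 \<and> m1 = m2) \<or> (m1 = m2 + 2 \<and> l1 = l2)" .
next
  assume "(l1 = l2 + 2 \<and> m1 = m2) \<or> (m1 = m2 + 2 \<and> l1 = l2)"
  then show "\<exists>B A :: 'a mat. nilpotent_mat n B \<and> nilpotent_mat n A \<and> B * A = A * B
      \<and> has_shape B {#l1, l2#} \<and> has_shape A {#m1, m2#}"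
    by (rule commuting_pair_with_shapes[OF assms(3,4,6,7)])
qed

end
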